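(* Let $f$ be a $T$-norm with a differentiable additive generator $\mu$ such that $\frac{d\mu(x)}{dx}$ is nondecreasing. Then $f$ satisfies property $A$.
   Context: A $T$-norm is a function $f:[0,1]^2\to[0,1]$ that is commutative, associative, monotonic ($x\leq y$ implies $f(x,z)\leq f(y,z)$) and satisfies $f(x,1)=x$. An additive generator of $f$ is a strictly decreasing function $\mu:[0,1]\to[0,\infty]$, right-continuous at $0$, with $\mu(1)=0$, such that for all $x,y\in[0,1]$, $\mu(x)+\mu(y)\in \mathrm{Range}(\mu)\cup[\mu(0),\infty]$ and $f(x,y)=\mu^{(-1)}(\mu(x)+\mu(y))$, where $\mu^{(-1)}(t)=\sup\{x\in[0,1]:\mu(x)>t\}$ is the pseudo-inverse. A function $f:[0,1]^2\to[0,1]$ satisfies property $A$ if for all $0\leq x\leq y\leq z\leq w\leq 1$, $w+x\leq y+z$ implies $f(x,w)\leq f(y,z)$. *)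

theory Defs
  imports "HOL-Analysis.Analysis" "HOL-Library.Extended_Nonnegative_Real"
begin

definition tnorm :: "(real \<Rightarrow> real \<Rightarrow> real) \<Rightarrow> bool" where
  "tnorm f \<longleftrightarrow>
     (\<forall>x\<in>{0..1}. \<forall>y\<in>{0..1}. f x y \<in> {0..1}) \<and>
     (\<forall>x\<in>{0..1}. \<forall>y\<in>{0..1}. f x y = f y x) \<and>
     (\<forall>x\<in>{0..1}. \<forall>y\<in>{0..1}. \<forall>z\<in>{0..1}. f (f x y) z = f x (f y z)) \<and>
     (\<forall>x\<in>{0..1}. \<forall>y\<in>{0..1}. \<forall>z\<in>{0..1}. x \<le> y \<longrightarrow> f x z \<le> f y z) \<and>
     (\<forall>x\<in>{0..1}. f x 1 = x)"

definition pseudo_inv :: "(real \<Rightarrow> ennreal) \<Rightarrow> ennreal \<Rightarrow> real" where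
  "pseudo_inv \<mu> t = (if {x\<in>{0..1}. \<mu> x > t} = {} then 0 else Sup {x\<in>{0..1}. \<mu> x > t})"

definition additive_generator :: "(real \<Rightarrow> ennreal) \<Rightarrow> (real \<Rightarrow> real \<Rightarrow> real) \<Rightarrow> bool" where
  "additive_generator \<mu> f \<longleftrightarrow>
     (\<forall>x y. 0 \<le> x \<longrightarrow> x < y \<longrightarrow> y \<le> 1 \<longrightarrow> \<mu> y < \<mu> x) \<and>
     (\<mu> \<longlongrightarrow> \<mu> 0) (at_right 0) \<and>
     \<mu> 1 = 0 \<and>
     (\<forall>x\<in>{0..1}. \<forall>y\<in>{0..1}. \<mu> x + \<mu> y \<in> \<mu> ` {0..1} \<union> {\<mu> 0..}) \<and>
     (\<forall>x\<in>{0..1}. \<forall>y\<in>{0..1}. f x y = pseudo_inv \<mu> (\<mu> x + \<mu> y))"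

definition property_A :: "(real \<Rightarrow> real \<Rightarrow> real) \<Rightarrow> bool" where
  "property_A f \<longleftrightarrow>
     (\<forall>x y z w. 0 \<le> x \<longrightarrow> x \<le> y \<longrightarrow> y \<le> z \<longrightarrow> z \<le> w \<longrightarrow> w \<le> 1 \<longrightarrow>
        w + x \<le> y + z \<longrightarrow> f x w \<le> f y z)"

end

theory Submission
  imports Defs
begin

text \<open>On \<open>(0, 1]\<close> the generator is finite, so one may argue with the real function
  \<open>g = enn2real \<circ> \<mu>\<close>. Since \<open>g'\<close> is nondecreasing, by the mean value theorem the increment of \<open>g\<close>
  over an interval grows when the interval is shifted to the right. For \<open>0 < x \<le> y \<le> z \<le> w\<close>
  with \<open>w + x \<le> y + z\<close> put \<open>y' = x + w - z \<in> [x, y]\<close>: then \<open>g y' - g x \<le> g w - g z\<close> and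
  \<open>g y \<le> g y'\<close>, so \<open>\<mu> y + \<mu> z \<le> \<mu> x + \<mu> w\<close>, and the antitone pseudo-inverse turns this into
  \<open>f x w \<le> f y z\<close>. For \<open>x = 0\<close> there is nothing to do, as \<open>0\<close> is absorbing for every T-norm.\<close>

lemma real_mvt_within_Icc:
  fixes g g' :: "real \<Rightarrow> real"
  assumes "a < b"
    and "\<And>x. x \<in> {a..b} \<Longrightarrow> (g has_real_derivative g' x) (at x within {a..b})"
  shows "\<exists>z\<in>{a<..<b}. g b - g a = (b - a) * g' z"
  using mvt_simple[of a b g "\<lambda>x. (*) (g' x)"] assms
  by (auto simp: has_field_derivative_def mult.commute)

lemma increment_le_of_mono_deriv:
  fixes g g' :: "real \<Rightarrow> real"
  assumes deriv: "\<And>x. x \<in> {a..d} \<Longrightarrow> (g has_real_derivative g' x) (at x within {a..d})"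
    and mono: "\<And>x y. x \<in> {a..d} \<Longrightarrow> y \<in> {a..d} \<Longrightarrow> x \<le> y \<Longrightarrow> g' x \<le> g' y"
    and "a \<le> b" "b \<le> c" "c \<le> d" "b - a = d - c"
  shows "g b - g a \<le> g d - g c"
proof (cases "a = b")
  case False
  then have "a < b" "c < d" using assms by auto
  have deriv_sub: "(g has_real_derivative g' x) (at x within {s..t})"
    if "x \<in> {s..t}" "a \<le> s" "t \<le> d" for x s t
    using DERIV_subset[OF deriv] that by auto
  obtain \<xi> where \<xi>: "\<xi> \<in> {a<..<b}" "g b - g a = (b - a) * g' \<xi>"
    using real_mvt_within_Icc[OF \<open>a < b\<close>, of g g'] deriv_sub \<open>b \<le> c\<close> \<open>c \<le> d\<close> by force
  obtain \<eta> where \<eta>: "\<eta> \<in> {c<..<d}" "g d - g c = (d - c) * g' \<eta>"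
    using real_mvt_within_Icc[OF \<open>c < d\<close>, of g g'] deriv_sub \<open>a \<le> b\<close> \<open>b \<le> c\<close> by force
  have "g' \<xi> \<le> g' \<eta>" using mono \<xi>(1) \<eta>(1) assms by auto
  then show ?thesis
    using \<xi>(2) \<eta>(2) \<open>a < b\<close> \<open>b - a = d - c\<close> by (simp add: mult_left_mono)
qed (use assms in simp)

lemma pseudo_inv_antimono:
  assumes "s \<le> t"
  shows "pseudo_inv \<mu> t \<le> pseudo_inv \<mu> s"
proof -
  let ?S = "{x\<in>{0..1}. \<mu> x > s}" and ?T = "{x\<in>{0..1}. \<mu> x > t}"
  have "?T \<subseteq> ?S" using assms by auto
  have "bdd_above ?S" by (rule bdd_aboveI[of _ 1]) auto
  show ?thesis
  proof (cases "?T = {}")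
    case True
    show ?thesis
    proof (cases "?S = {}")
      case False
      then obtain x where "x \<in> ?S" by blast
      then have "0 \<le> Sup ?S" using cSup_upper[OF _ \<open>bdd_above ?S\<close>] by force
      then show ?thesis using True False unfolding pseudo_inv_def by simp
    qed (use True in \<open>simp add: pseudo_inv_def\<close>)
  next
    case False
    then have "Sup ?T \<le> Sup ?S"
      using \<open>?T \<subseteq> ?S\<close> \<open>bdd_above ?S\<close> by (intro cSup_subset_mono)
    then show ?thesis using False \<open>?T \<subseteq> ?S\<close> unfolding pseudo_inv_def by auto
  qed
qed

lemma tnorm_zero_left:
  assumes "tnorm f" and "w \<in> {0..1}"
  shows "f 0 w = 0"
proof -
  have comm: "f a b = f b a" if "a \<in> {0..1}" "b \<in> {0..1}" for a b
    using assms(1) that unfolding tnorm_def by blast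
  have mono: "f a c \<le> f b c" if "a \<in> {0..1}" "b \<in> {0..1}" "c \<in> {0..1}" "a \<le> b" for a b c
    using assms(1) that unfolding tnorm_def by blast
  have unit: "f a 1 = a" if "a \<in> {0..1}" for a
    using assms(1) that unfolding tnorm_def by blast
  have "f 0 w = f w 0" using assms(2) by (intro comm) auto
  also have "\<dots> \<le> f 1 0" using assms(2) by (intro mono) auto
  also have "\<dots> = f 0 1" by (intro comm) auto
  also have "\<dots> = 0" by (intro unit) auto
  finally have "f 0 w \<le> 0" .
  moreover have "0 \<le> f 0 w" using assms unfolding tnorm_def by auto
  ultimately show ?thesis by simp
qed

lemma additive_generator_le_if_sum_ge:
  assumes "additive_generator \<mu> f" and "x \<in> {0..1}" "w \<in> {0..1}" "y \<in> {0..1}" "z \<in> {0..1}"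
    and "\<mu> y + \<mu> z \<le> \<mu> x + \<mu> w"
  shows "f x w \<le> f y z"
proof -
  have "f x w = pseudo_inv \<mu> (\<mu> x + \<mu> w)" "f y z = pseudo_inv \<mu> (\<mu> y + \<mu> z)"
    using assms(1-5) unfolding additive_generator_def by blast+
  then show ?thesis using pseudo_inv_antimono[OF assms(6)] by simp
qed

lemma additive_generator_enn2real_antimono:
  assumes "additive_generator \<mu> f" and "\<forall>x\<in>{0<..1}. \<mu> x < \<infinity>"
    and "0 < s" "s \<le> t" "t \<le> 1"
  shows "enn2real (\<mu> t) \<le> enn2real (\<mu> s)"
proof (cases "s = t")
  case False
  then have "\<mu> t < \<mu> s" using assms unfolding additive_generator_def by auto
  then show ?thesis using assms by (intro enn2real_mono) auto
qed simp

lemma additive_generator_sum_le_if_mono_deriv: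
  fixes \<mu> :: "real \<Rightarrow> ennreal" and \<mu>' :: "real \<Rightarrow> real"
  assumes "additive_generator \<mu> f"
    and "\<forall>x\<in>{0<..1}. \<mu> x < \<infinity>"
    and "\<forall>x\<in>{0<..1}. ((\<lambda>t. enn2real (\<mu> t)) has_real_derivative \<mu>' x) (at x within {0..1})"
    and "\<forall>x\<in>{0<..1}. \<forall>y\<in>{0<..1}. x \<le> y \<longrightarrow> \<mu>' x \<le> \<mu>' y"
    and h: "0 < x" "x \<le> y" "y \<le> z" "z \<le> w" "w \<le> 1" "w + x \<le> y + z"
  shows "\<mu> y + \<mu> z \<le> \<mu> x + \<mu> w"
proof -
  define g where "g t = enn2real (\<mu> t)" for t
  have \<mu>_eq: "\<mu> t = ennreal (g t)" if "t \<in> {x..1}" for t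
    using assms(2) that h by (auto simp: g_def less_top)
  have g_nonneg: "0 \<le> g t" for t by (simp add: g_def)
  have deriv: "(g has_real_derivative \<mu>' t) (at t within {x..w})" if "t \<in> {x..w}" for t
  proof (rule DERIV_subset)
    show "(g has_real_derivative \<mu>' t) (at t within {0..1})"
      using assms(3) that h by (simp add: g_def [abs_def])
  qed (use h in auto)
  have mono: "\<mu>' s \<le> \<mu>' t" if "s \<in> {x..w}" "t \<in> {x..w}" "s \<le> t" for s t
    using assms(4) that h by simp
  define y' where "y' = x + w - z"
  have increment: "g y' - g x \<le> g w - g z"
    using increment_le_of_mono_deriv[OF deriv mono, of y' z] h unfolding y'_def by simp
  have antimono: "g y \<le> g y'"
    using additive_generator_enn2real_antimono[OF assms(1,2), of y' y] h
    unfolding g_def y'_def by simp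
  have "\<mu> y + \<mu> z = ennreal (g y + g z)"
    using h by (simp add: \<mu>_eq g_nonneg)
  also have "\<dots> \<le> ennreal (g x + g w)"
    using increment antimono by (intro ennreal_leI) linarith
  also have "\<dots> = \<mu> x + \<mu> w"
    using h by (simp add: \<mu>_eq g_nonneg)
  finally show ?thesis .
qed

theorem corollary2:
  fixes f :: "real \<Rightarrow> real \<Rightarrow> real" and \<mu> :: "real \<Rightarrow> ennreal" and \<mu>' :: "real \<Rightarrow> real"
  assumes "tnorm f"
    and "additive_generator \<mu> f"
    and "\<forall>x\<in>{0<..1}. \<mu> x < \<infinity>"
    and "\<forall>x\<in>{0<..1}. ((\<lambda>t. enn2real (\<mu> t)) has_real_derivative \<mu>' x) (at x within {0..1})"
    and "\<forall>x\<in>{0<..1}. \<forall>y\<in>{0<..1}. x \<le> y \<longrightarrow> \<mu>' x \<le> \<mu>' y"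
  shows "property_A f"
  unfolding property_A_def
proof (intro allI impI)
  fix x y z w :: real
  assume h: "0 \<le> x" "x \<le> y" "y \<le> z" "z \<le> w" "w \<le> 1" "w + x \<le> y + z"
  show "f x w \<le> f y z"
  proof (cases "x = 0")
    case True
    then have "f x w = 0" using tnorm_zero_left[OF assms(1)] h by simp
    moreover have "0 \<le> f y z" using assms(1) h unfolding tnorm_def by simp
    ultimately show ?thesis by simp
  next
    case False
    then have "\<mu> y + \<mu> z \<le> \<mu> x + \<mu> w"
      using additive_generator_sum_le_if_mono_deriv[OF assms(2-5)] h by simp
    then show ?thesis using additive_generator_le_if_sum_ge[OF assms(2)] h by simp
  qed
qed

end
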